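(* Let $n\ge p\ge1$, $U\in St(n,p)$, $\Delta\in T_USt(n,p)$, and let $\gamma(t)=\mathrm{Exp}_U(t\Delta)$ be the geodesic of $St(n,p)$ under the Euclidean metric, regarded as a curve in $\mathbb R^{n\times p}$. Then there exist $m\in\mathbb N$, real numbers $a_1,\dots,a_m,b_1,\dots,b_m$, a matrix $C_0\in\mathbb R^{n\times p}$ and matrices $E_1,\dots,E_{2m}\in\mathbb R^{n\times p}$ that are orthonormal with respect to $\langle X,Y\rangle=\operatorname{tr}(X^TY)$ such that for all $t\in\mathbb R$ $$\gamma(t)=C_0+\sum_{i=1}^m a_i\big(\cos(b_it)\,E_{2i-1}+\sin(b_it)\,E_{2i}\big).$$ Equivalently, up to a Euclidean isometry, $\gamma(t)=(a_1\cos(b_1t),a_1\sin(b_1t),\dots,a_m\cos(b_mt),a_m\sin(b_mt))^T$ (padded with zeros).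
   Context: $St(n,p)=\{U\in\mathbb R^{n\times p}: U^TU=I_p\}$ with $T_USt(n,p)=\{\Delta: U^T\Delta=-\Delta^TU\}$. The Euclidean metric is the restriction of $\operatorname{tr}(X^TY)$ to tangent spaces, and $\mathrm{Exp}_U$ is its Riemannian exponential map; explicitly $\mathrm{Exp}_U(t\Delta)=\begin{pmatrix}U&Q\end{pmatrix}\exp_m\!\left(t\begin{pmatrix}2A&-B^T\\ B&0\end{pmatrix}\right)\begin{pmatrix}I_p\\0\end{pmatrix}\exp_m(-tA)$ with $A=U^T\Delta$, $QB=(I-UU^T)\Delta$, $Q$ with orthonormal columns orthogonal to $U$, $\exp_m$ the matrix exponential. *)

theory Defs
  imports "HOL-Analysis.Analysis"
begin

text \<open>n x p real matrices are represented as real^'p^'n (rows indexed by 'n, columns by 'p).\<close>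

definition frob_inner :: "real^'p^'n \<Rightarrow> real^'p^'n \<Rightarrow> real" where
  "frob_inner X Y = trace (transpose X ** Y)"

definition stiefel :: "(real^'p^'n) set" where
  "stiefel = {U. transpose U ** U = mat 1}"

definition stiefel_tangent :: "real^'p^'n \<Rightarrow> (real^'p^'n) set" where
  "stiefel_tangent U = {D. transpose U ** D = - (transpose D ** U)}"

definition euclid_geodesic :: "real^'p^'n \<Rightarrow> real^'p^'n \<Rightarrow> (real \<Rightarrow> real^'p^'n) \<Rightarrow> bool" where
  "euclid_geodesic U V \<gamma> \<longleftrightarrow>
     (\<exists>\<gamma>' \<gamma>''.
        (\<forall>t. (\<gamma> has_vector_derivative \<gamma>' t) (at t)) \<and>
        (\<forall>t. (\<gamma>' has_vector_derivative \<gamma>'' t) (at t)) \<and>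
        (\<forall>t. \<gamma> t \<in> stiefel) \<and>
        (\<forall>t. \<forall>D \<in> stiefel_tangent (\<gamma> t). frob_inner (\<gamma>'' t) D = 0) \<and>
        \<gamma> 0 = U \<and> \<gamma>' 0 = V)"

definition stiefel_Exp :: "real^'p^'n \<Rightarrow> real^'p^'n \<Rightarrow> real^'p^'n" where
  "stiefel_Exp U V = (THE \<gamma>. euclid_geodesic U V \<gamma>) 1"

end

theory Submission
  imports Defs
begin

text \<open>The curve \<open>\<eta>(t) = exp(t N) U exp(-t A)\<close>, with \<open>A = U\<^sup>T \<Delta>\<close> and
  \<open>N = \<Delta> U\<^sup>T - U \<Delta>\<^sup>T\<close>, is the flow through \<open>U\<close> of the Sylvester operator \<open>X \<mapsto> N X - X A\<close>.
  Both \<open>N\<close> and \<open>A\<close> are skew, so this operator is skew-adjoint for \<open>tr(X\<^sup>T Y)\<close>.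
  A skew-adjoint operator splits the space orthogonally into its kernel and planes on which it
  acts as an infinitesimal rotation with angular speed \<open>b\<^sub>i\<close>; decomposing \<open>U\<close> accordingly and
  turning each plane so that the component of \<open>U\<close> lies along its first axis, the flow is the
  claimed superposition of circles.

  The curve \<open>\<eta>\<close> is a geodesic: \<open>\<eta>\<^sup>T \<eta>\<close> obeys a skew-adjoint linear equation with the
  stationary solution \<open>I\<close>, and \<open>\<eta>'' = -\<eta> C\<close> with \<open>C\<close> symmetric, which is normal to the
  Stiefel manifold. Geodesics are unique since they solve the second-order equation
  \<open>\<gamma>'' = -\<gamma> \<gamma>'\<^sup>T \<gamma>'\<close>, whose right-hand side is Lipschitz along them (Gronwall), so \<open>\<eta>\<close>
  is the curve defining \<open>Exp\<^sub>U\<close>.\<close>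

section \<open>The Frobenius inner product and matrix calculus\<close>

lemma frob_inner_eq_inner: "frob_inner (X::real^'p^'n) Y = X \<bullet> Y"
  unfolding frob_inner_def trace_def inner_vec_def
  by (simp add: matrix_matrix_mult_def transpose_def sum.swap[of _ "UNIV::'p set"])

lemma inner_matrix_mult_left: "((A::real^'n^'m) ** X) \<bullet> (Y::real^'p^'m) = X \<bullet> (transpose A ** Y)"
  by (simp add: frob_inner_eq_inner[symmetric] frob_inner_def matrix_transpose_mul matrix_mul_assoc)

lemma inner_matrix_mult_right: "((X::real^'n^'m) ** B) \<bullet> (Y::real^'p^'m) = X \<bullet> (Y ** transpose B)"
proof -
  have "trace ((transpose B ** transpose X) ** Y) = trace (transpose X ** (Y ** transpose B))"
    by (metis matrix_mul_assoc trace_mul_sym)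
  then show ?thesis
    by (simp add: frob_inner_eq_inner[symmetric] frob_inner_def matrix_transpose_mul)
qed

lemma inner_transpose: "transpose (X::real^'p^'n) \<bullet> transpose Y = X \<bullet> Y"
  unfolding inner_vec_def by (simp add: transpose_def sum.swap[of _ "UNIV::'p set"])

lemma norm_transpose: "norm (transpose (X::real^'p^'n)) = norm X"
  by (simp add: norm_eq_sqrt_inner inner_transpose)

lemma inner_symmetric_skew:
  fixes S W :: "real^'p^'p"
  assumes "transpose S = S" and "transpose W = - W"
  shows "S \<bullet> W = 0"
proof -
  have "S \<bullet> W = transpose S \<bullet> transpose W" by (simp only: inner_transpose)
  also have "\<dots> = - (S \<bullet> W)" by (simp add: assms)
  finally show ?thesis by simp
qed

lemma norm_matrix_mult_le: "norm ((A::real^'n^'m) ** (B::real^'p^'n)) \<le> norm A * norm B"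
proof -
  have "(A ** B) $ i $ j = A$i \<bullet> column j B" for i j
    by (simp add: matrix_matrix_mult_def inner_vec_def column_def)
  then have "(norm (A ** B))\<^sup>2 = (\<Sum>i\<in>UNIV. \<Sum>j\<in>UNIV. (A$i \<bullet> column j B)\<^sup>2)"
    unfolding power2_norm_eq_inner by (simp add: inner_vec_def power2_eq_square)
  also have "\<dots> \<le> (\<Sum>i\<in>UNIV. \<Sum>j\<in>UNIV. (norm (A$i))\<^sup>2 * (norm (column j B))\<^sup>2)"
  proof (intro sum_mono)
    fix i j
    have "\<bar>A$i \<bullet> column j B\<bar>\<^sup>2 \<le> (norm (A$i) * norm (column j B))\<^sup>2"
      by (rule power_mono[OF Cauchy_Schwarz_ineq2]) simp
    then show "(A$i \<bullet> column j B)\<^sup>2 \<le> (norm (A$i))\<^sup>2 * (norm (column j B))\<^sup>2"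
      by (simp add: power_mult_distrib)
  qed
  also have "\<dots> = (\<Sum>i\<in>UNIV. (norm (A$i))\<^sup>2) * (\<Sum>j\<in>UNIV. (norm (column j B))\<^sup>2)"
    by (simp add: sum_product)
  also have "\<dots> = (norm A * norm B)\<^sup>2"
    by (simp add: power2_norm_eq_inner inner_vec_def column_def power_mult_distrib
        sum.swap[of _ "UNIV::'p set"])
  finally show ?thesis
    by (meson norm_ge_zero power2_le_imp_le zero_le_mult_iff)
qed

lemma norm_matrix_mult_le_trans:
  "norm A \<le> a \<Longrightarrow> norm B \<le> b \<Longrightarrow> norm ((A::real^'n^'m) ** (B::real^'p^'n)) \<le> a * b"
  by (meson norm_matrix_mult_le mult_mono norm_ge_zero order_trans)

interpretation matrix_mult: bounded_bilinear "(**) :: real^'n^'m \<Rightarrow> real^'p^'n \<Rightarrow> real^'p^'m"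
proof
  fix A A' :: "real^'n^'m" and B B' :: "real^'p^'n" and r :: real
  show "(A + A') ** B = A ** B + A' ** B" "A ** (B + B') = A ** B + A ** B'"
    "(r *\<^sub>R A) ** B = r *\<^sub>R (A ** B)" "A ** (r *\<^sub>R B) = r *\<^sub>R (A ** B)"
    by (simp_all add: vec_eq_iff matrix_matrix_mult_def sum.distrib sum_distrib_left algebra_simps)
  show "\<exists>K. \<forall>A B. norm ((A::real^'n^'m) ** (B::real^'p^'n)) \<le> norm A * norm B * K"
    using norm_matrix_mult_le by (metis mult.right_neutral)
qed

lemma bounded_linear_transpose: "bounded_linear (transpose :: real^'p^'n \<Rightarrow> real^'n^'p)"
  by (rule bounded_linear_intro[where K=1])
    (simp_all add: norm_transpose, simp_all add: vec_eq_iff transpose_def)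

lemmas transpose_add = linear_add[OF bounded_linear.linear[OF bounded_linear_transpose]]
  and transpose_diff = linear_diff[OF bounded_linear.linear[OF bounded_linear_transpose]]
  and transpose_neg = linear_neg[OF bounded_linear.linear[OF bounded_linear_transpose]]
  and transpose_scaleR = linear_scale[OF bounded_linear.linear[OF bounded_linear_transpose]]
  and transpose_zero = linear_0[OF bounded_linear.linear[OF bounded_linear_transpose]]

lemmas matrix_algebra_simps = matrix_mult.add_left matrix_mult.add_right matrix_mult.diff_left
  matrix_mult.diff_right matrix_mult.minus_left matrix_mult.minus_right matrix_mult.scaleR_left
  matrix_mult.scaleR_right transpose_zero transpose_add transpose_diff transpose_neg transpose_scaleR
  matrix_transpose_mul matrix_mul_assoc

section \<open>Normal form of skew-adjoint operators\<close>

definition skew_adjoint :: "('a::real_inner \<Rightarrow> 'a) \<Rightarrow> bool" where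
  "skew_adjoint L \<longleftrightarrow> linear L \<and> (\<forall>x y. L x \<bullet> y = - (x \<bullet> L y))"

lemma skew_adjoint_inner_self: "skew_adjoint L \<Longrightarrow> L x \<bullet> x = 0"
  unfolding skew_adjoint_def by (metis inner_commute neg_equal_zero)

lemma skew_adjoint_flow_unique:
  fixes X Y :: "real \<Rightarrow> 'a::euclidean_space"
  assumes L: "skew_adjoint L"
    and dX: "\<And>t. (X has_vector_derivative L (X t)) (at t)"
    and dY: "\<And>t. (Y has_vector_derivative L (Y t)) (at t)"
    and "X 0 = Y 0"
  shows "X t = Y t"
proof -
  have lin: "linear L" using L by (simp add: skew_adjoint_def)
  define D where "D s = X s - Y s" for s
  have dD: "(D has_vector_derivative L (D s)) (at s)" for s
    unfolding D_def using has_vector_derivative_diff[OF dX dY] by (simp add: linear_diff[OF lin])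
  \<comment> \<open>\<open>|D|\<^sup>2\<close> is conserved because \<open>L\<close> is skew-adjoint\<close>
  have "DERIV (\<lambda>s. D s \<bullet> D s) s :> 0" for s
    using bounded_bilinear.has_vector_derivative[OF bounded_bilinear_inner dD dD]
      skew_adjoint_inner_self[OF L]
    by (simp add: has_real_derivative_iff_has_vector_derivative inner_commute)
  then have "D t \<bullet> D t = D 0 \<bullet> D 0"
    by (intro DERIV_isconst_all) auto
  then show ?thesis using assms(4) by (simp add: D_def)
qed

definition rotation_pair :: "('a::real_inner \<Rightarrow> 'a) \<Rightarrow> real \<Rightarrow> 'a \<Rightarrow> 'a \<Rightarrow> bool" where
  "rotation_pair L b x y \<longleftrightarrow>
     x \<bullet> x = 1 \<and> y \<bullet> y = 1 \<and> x \<bullet> y = 0 \<and> L x = b *\<^sub>R y \<and> L y = - (b *\<^sub>R x)"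

lemma rotation_pair_rotate:
  assumes "linear L" and "rotation_pair L b x y"
  shows "rotation_pair L b (cos \<theta> *\<^sub>R x + sin \<theta> *\<^sub>R y) (cos \<theta> *\<^sub>R y - sin \<theta> *\<^sub>R x)"
proof -
  have "(cos \<theta>)\<^sup>2 + (sin \<theta>)\<^sup>2 = 1" by simp
  then show ?thesis
    using assms unfolding rotation_pair_def
    by (simp add: linear_add linear_diff linear_scale inner_add_left inner_add_right
        inner_diff_left inner_diff_right inner_commute[of y x] power2_eq_square algebra_simps)
qed

lemma quadratic_le_imp_linear_coeff_zero:
  fixes c d :: real
  assumes "\<And>s. 2 * s * c \<le> s\<^sup>2 * d"
  shows "c = 0"
proof (rule ccontr)
  assume "c \<noteq> 0"
  define s where "s = c / (\<bar>d\<bar> + 1)"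
  have s: "s * (\<bar>d\<bar> + 1) = c" by (simp add: s_def add_pos_nonneg)
  have "2 * c\<^sup>2 * (\<bar>d\<bar> + 1) = (2 * s * c) * (\<bar>d\<bar> + 1)\<^sup>2"
    by (simp add: s[symmetric] power2_eq_square)
  also have "\<dots> \<le> (s\<^sup>2 * d) * (\<bar>d\<bar> + 1)\<^sup>2"
    by (rule mult_right_mono[OF assms]) simp
  also have "\<dots> = c\<^sup>2 * d"
    by (simp add: s[symmetric] power_mult_distrib)
  finally have "2 * c\<^sup>2 * (\<bar>d\<bar> + 1) \<le> c\<^sup>2 * d" .
  moreover have "c\<^sup>2 * d < c\<^sup>2 * (2 * (\<bar>d\<bar> + 1))"
    using \<open>c \<noteq> 0\<close> by (intro mult_strict_left_mono) auto
  ultimately show False by (simp add: algebra_simps)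
qed

lemma linear_attains_norm_ratio_max:
  fixes L :: "'a::euclidean_space \<Rightarrow> 'b::real_normed_vector"
  assumes lin: "linear L" and S: "subspace S" and z: "z \<in> S" "z \<noteq> 0"
  shows "\<exists>x\<in>S. norm x = 1 \<and> (\<forall>w\<in>S. norm (L w) \<le> norm (L x) * norm w)"
proof -
  define K where "K = S \<inter> sphere 0 1"
  have "compact K"
    unfolding K_def by (metis Int_commute closed_subspace[OF S] compact_Int_closed compact_sphere)
  have unit: "w /\<^sub>R norm w \<in> K" if "w \<in> S" "w \<noteq> 0" for w
    using that S by (simp add: K_def subspace_scale)
  have "continuous_on K (\<lambda>x. norm (L x))"
    by (intro continuous_intros bounded_linear.continuous_on[OF linear_conv_bounded_linear[THEN iffD1, OF lin]])
  then obtain x where "x \<in> K" and max: "\<And>y. y \<in> K \<Longrightarrow> norm (L y) \<le> norm (L x)"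
    using continuous_attains_sup[OF \<open>compact K\<close>] unit[OF z] by blast
  have "norm (L w) \<le> norm (L x) * norm w" if "w \<in> S" for w
  proof (cases "w = 0")
    case False
    from max[OF unit[OF that False]] show ?thesis
      using False by (simp add: linear_scale[OF lin] field_simps)
  qed (simp add: linear_0[OF lin])
  then show ?thesis using \<open>x \<in> K\<close> by (auto simp: K_def)
qed

lemma skew_adjoint_maximiser_eigenvector:
  assumes L: "skew_adjoint L" and S: "subspace S" "L ` S \<subseteq> S"
    and x: "x \<in> S" "norm x = 1"
    and max: "\<And>w. w \<in> S \<Longrightarrow> norm (L w) \<le> norm (L x) * norm w"
  shows "L (L x) = - ((L x \<bullet> L x) *\<^sub>R x)"
proof -
  have lin: "linear L" and sk: "\<And>u v. L u \<bullet> v = - (u \<bullet> L v)"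
    using L by (auto simp: skew_adjoint_def)
  define \<mu> where "\<mu> = L x \<bullet> L x"
  have xx: "x \<bullet> x = 1" using x(2) by (simp add: norm_eq_sqrt_inner)
  have max2: "L w \<bullet> L w \<le> \<mu> * (w \<bullet> w)" if "w \<in> S" for w
    using power_mono[OF max[OF that] norm_ge_zero, of 2]
    by (simp add: \<mu>_def power_mult_distrib power2_norm_eq_inner)
  have orth: "(L (L x) + \<mu> *\<^sub>R x) \<bullet> y = 0" if y: "y \<in> S" for y
  proof -
    define c where "c = L x \<bullet> L y - \<mu> * (x \<bullet> y)"
    define d where "d = \<mu> * (y \<bullet> y) - L y \<bullet> L y"
    \<comment> \<open>first variation of the Rayleigh quotient along \<open>y\<close>\<close>
    have "2 * s * c \<le> s\<^sup>2 * d" for s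
    proof -
      have "x + s *\<^sub>R y \<in> S" using x y S by (simp add: subspace_add subspace_scale)
      from max2[OF this] show ?thesis
        by (simp add: c_def d_def \<mu>_def xx linear_add[OF lin] linear_scale[OF lin] inner_add_left
            inner_add_right inner_commute[of "L y" "L x"] inner_commute[of y x] power2_eq_square
            algebra_simps)
    qed
    then have "c = 0" by (rule quadratic_le_imp_linear_coeff_zero)
    then show ?thesis using sk[of "L x" y] by (simp add: c_def inner_add_left)
  qed
  have "L (L x) + \<mu> *\<^sub>R x \<in> S" using x S by (auto intro!: subspace_add subspace_scale)
  from orth[OF this] show ?thesis by (simp add: \<mu>_def eq_neg_iff_add_eq_0)
qed

lemma skew_adjoint_rotation_pair_exists:
  fixes L :: "'a::euclidean_space \<Rightarrow> 'a"
  assumes L: "skew_adjoint L" and S: "subspace S" "L ` S \<subseteq> S"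
    and z: "z \<in> S" "L z \<noteq> 0"
  shows "\<exists>b x y. x \<in> S \<and> y \<in> S \<and> rotation_pair L b x y"
proof -
  have lin: "linear L" using L by (simp add: skew_adjoint_def)
  have "z \<noteq> 0" using z linear_0[OF lin] by auto
  then obtain x where x: "x \<in> S" "norm x = 1"
    and max: "\<And>w. w \<in> S \<Longrightarrow> norm (L w) \<le> norm (L x) * norm w"
    using linear_attains_norm_ratio_max[OF lin S(1) z(1)] by blast
  define \<mu> where "\<mu> = L x \<bullet> L x"
  have "L x \<noteq> 0" using max[OF z(1)] z(2) by auto
  then have "\<mu> > 0" by (simp add: \<mu>_def)
  define b where "b = sqrt \<mu>"
  have b: "b > 0" "b * b = \<mu>" using \<open>\<mu> > 0\<close> by (simp_all add: b_def)
  define y where "y = (1 / b) *\<^sub>R L x"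
  have LLx: "L (L x) = - (\<mu> *\<^sub>R x)"
    unfolding \<mu>_def by (rule skew_adjoint_maximiser_eigenvector[OF L S x max])
  have "y \<in> S" using x S by (auto simp: y_def intro!: subspace_scale)
  moreover have "rotation_pair L b x y"
    unfolding rotation_pair_def
  proof (intro conjI)
    show "x \<bullet> x = 1" using x(2) by (simp add: norm_eq_sqrt_inner)
    show "y \<bullet> y = 1" using b \<open>\<mu> > 0\<close> by (simp add: y_def \<mu>_def[symmetric] field_simps)
    show "x \<bullet> y = 0" using skew_adjoint_inner_self[OF L, of x] by (simp add: y_def inner_commute)
    show "L x = b *\<^sub>R y" using b by (simp add: y_def)
    show "L y = - (b *\<^sub>R x)" using b \<open>\<mu> > 0\<close> by (simp add: y_def linear_scale[OF lin] LLx field_simps)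
  qed
  ultimately show ?thesis using x by blast
qed

lemma skew_adjoint_rotation_pair_orthogonal:
  fixes L :: "'a::euclidean_space \<Rightarrow> 'a"
  assumes L: "skew_adjoint L" and S: "subspace S" "L ` S \<subseteq> S"
    and z: "z \<in> S" "L z \<noteq> 0"
  shows "\<exists>b x y. x \<in> S \<and> y \<in> S \<and> rotation_pair L b x y \<and> v \<bullet> y = 0"
proof -
  obtain b x y where xy: "x \<in> S" "y \<in> S" and pair: "rotation_pair L b x y"
    using skew_adjoint_rotation_pair_exists[OF L S z] by blast
  obtain r \<theta> where polar: "v \<bullet> x = r * cos \<theta>" "v \<bullet> y = r * sin \<theta>"
    using polar_Ex by blast
  \<comment> \<open>turn the plane so that the component of \<open>v\<close> in it lies along the first vector\<close>
  have "rotation_pair L b (cos \<theta> *\<^sub>R x + sin \<theta> *\<^sub>R y) (cos \<theta> *\<^sub>R y - sin \<theta> *\<^sub>R x)"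
    using L pair by (intro rotation_pair_rotate) (auto simp: skew_adjoint_def)
  moreover have "cos \<theta> *\<^sub>R x + sin \<theta> *\<^sub>R y \<in> S" "cos \<theta> *\<^sub>R y - sin \<theta> *\<^sub>R x \<in> S"
    using xy S by (auto intro: subspace_add subspace_diff subspace_scale)
  moreover have "v \<bullet> (cos \<theta> *\<^sub>R y - sin \<theta> *\<^sub>R x) = 0"
    by (simp add: inner_diff_right polar)
  ultimately show ?thesis by blast
qed

lemma skew_adjoint_orthogonal_complement:
  fixes L :: "'a::euclidean_space \<Rightarrow> 'a"
  assumes L: "skew_adjoint L" and S: "subspace S" "L ` S \<subseteq> S"
    and xy: "x \<in> S" "y \<in> S" and pair: "rotation_pair L b x y"
  defines "S' \<equiv> {w \<in> S. w \<bullet> x = 0 \<and> w \<bullet> y = 0}"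
  shows "subspace S'" and "L ` S' \<subseteq> S'" and "dim S' < dim S"
proof -
  show "subspace S'"
    using S unfolding S'_def subspace_def by (auto simp: inner_add_left)
  then have "span S' = S'" by (simp add: span_eq_iff)
  have sk: "\<And>u v. L u \<bullet> v = - (u \<bullet> L v)" using L by (simp add: skew_adjoint_def)
  show "L ` S' \<subseteq> S'"
    using S pair sk unfolding S'_def rotation_pair_def by auto
  have "x \<notin> S'" using pair by (simp add: S'_def rotation_pair_def)
  moreover have "span S = S" using S(1) by (simp add: span_eq_iff)
  moreover have "S' \<subseteq> S" by (auto simp: S'_def)
  ultimately have "span S' \<subset> span S" using xy \<open>span S' = S'\<close> by (metis psubsetI)
  then show "dim S' < dim S" by (rule dim_psubset)
qed

definition orthonormal_seq :: "nat \<Rightarrow> (nat \<Rightarrow> 'a::real_inner) \<Rightarrow> bool" where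
  "orthonormal_seq k E \<longleftrightarrow> (\<forall>i\<in>{1..k}. \<forall>j\<in>{1..k}. E i \<bullet> E j = (if i = j then 1 else 0))"

lemma orthonormal_seq_extend:
  assumes "orthonormal_seq k E" and "rotation_pair L b x y"
    and "\<forall>i\<in>{1..k}. E i \<bullet> x = 0 \<and> E i \<bullet> y = 0"
  shows "orthonormal_seq (k + 2) (E(k + 1 := x, k + 2 := y))"
  using assms unfolding orthonormal_seq_def rotation_pair_def
  by (auto simp: inner_commute le_Suc_eq)

lemma skew_adjoint_normal_form_on:
  fixes L :: "'a::euclidean_space \<Rightarrow> 'a"
  assumes L: "skew_adjoint L"
  shows "subspace S \<Longrightarrow> L ` S \<subseteq> S \<Longrightarrow> v \<in> S \<Longrightarrow>
    \<exists>m a b C0 E. C0 \<in> S \<and> L C0 = 0 \<and> orthonormal_seq (2 * m) E \<and> (\<forall>i\<in>{1..2 * m}. E i \<in> S) \<and>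
      (\<forall>i\<in>{1..m}. rotation_pair L (b i) (E (2 * i - 1)) (E (2 * i))) \<and>
      v = C0 + (\<Sum>i=1..m. a i *\<^sub>R E (2 * i - 1))"
proof (induction "dim S" arbitrary: S v rule: less_induct)
  case less
  note S = less.prems(1,2) and v = less.prems(3)
  show ?case
  proof (cases "\<forall>z\<in>S. L z = 0")
    case True
    then show ?thesis
      using v by (intro exI[of _ 0] exI[of _ "\<lambda>_. 0"] exI[of _ v] exI[of _ "\<lambda>_. 0"])
        (simp add: orthonormal_seq_def)
  next
    case False
    then obtain z where z: "z \<in> S" "L z \<noteq> 0" by blast
    obtain b0 x y where xy: "x \<in> S" "y \<in> S" and pair: "rotation_pair L b0 x y" and "v \<bullet> y = 0"
      using skew_adjoint_rotation_pair_orthogonal[OF L S z] by blast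
    define S' where "S' = {w \<in> S. w \<bullet> x = 0 \<and> w \<bullet> y = 0}"
    note S' = skew_adjoint_orthogonal_complement[OF L S xy pair, folded S'_def]
    have "v - (v \<bullet> x) *\<^sub>R x \<in> S'"
      using v xy S \<open>v \<bullet> y = 0\<close> pair
      by (simp add: S'_def subspace_diff subspace_scale inner_diff_left rotation_pair_def
          inner_commute[of y x])
    then obtain m a b C0 E where C0: "C0 \<in> S'" "L C0 = 0" and ON: "orthonormal_seq (2 * m) E"
      and ES': "\<forall>i\<in>{1..2 * m}. E i \<in> S'"
      and pairs: "\<forall>i\<in>{1..m}. rotation_pair L (b i) (E (2 * i - 1)) (E (2 * i))"
      and decomp: "v - (v \<bullet> x) *\<^sub>R x = C0 + (\<Sum>i=1..m. a i *\<^sub>R E (2 * i - 1))"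
      using less.hyps[OF S'(3) S'(1,2)] by blast
    define E' where "E' = E(2 * m + 1 := x, 2 * m + 2 := y)"
    have "orthonormal_seq (2 * Suc m) E'"
      using orthonormal_seq_extend[OF ON pair] ES' by (simp add: E'_def S'_def)
    moreover have "\<forall>i\<in>{1..2 * Suc m}. E' i \<in> S"
      using ES' xy by (auto simp: E'_def S'_def)
    moreover have "\<forall>i\<in>{1..Suc m}. rotation_pair L ((b(Suc m := b0)) i) (E' (2 * i - 1)) (E' (2 * i))"
      using pairs pair by (auto simp: E'_def le_Suc_eq, presburger)
    moreover have "v = C0 + (\<Sum>i=1..Suc m. (a(Suc m := v \<bullet> x)) i *\<^sub>R E' (2 * i - 1))"
    proof -
      have "(\<Sum>i=1..m. (a(Suc m := v \<bullet> x)) i *\<^sub>R E' (2 * i - 1)) = (\<Sum>i=1..m. a i *\<^sub>R E (2 * i - 1))"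
        by (intro sum.cong) (auto simp: E'_def)
      then show ?thesis using decomp by (simp add: E'_def algebra_simps)
    qed
    ultimately show ?thesis
      using C0 by (intro exI[of _ "Suc m"] exI[of _ "a(Suc m := v \<bullet> x)"] exI[of _ "b(Suc m := b0)"]
          exI[of _ C0] exI[of _ E']) (simp add: S'_def)
  qed
qed

lemma rotation_pair_circle_has_vector_derivative:
  assumes "linear L" and "rotation_pair L b x y"
  shows "((\<lambda>t. cos (b * t) *\<^sub>R x + sin (b * t) *\<^sub>R y) has_vector_derivative
    L (cos (b * t) *\<^sub>R x + sin (b * t) *\<^sub>R y)) (at t)"
  using assms unfolding rotation_pair_def
  by (auto intro!: derivative_eq_intros simp: linear_add linear_scale algebra_simps)

definition trig_curve :: "nat \<Rightarrow> 'a \<Rightarrow> (nat \<Rightarrow> real) \<Rightarrow> (nat \<Rightarrow> real) \<Rightarrow> (nat \<Rightarrow> 'a) \<Rightarrow> real \<Rightarrow> 'a::real_vector"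
  where "trig_curve m C0 a b E t =
    C0 + (\<Sum>i=1..m. a i *\<^sub>R (cos (b i * t) *\<^sub>R E (2 * i - 1) + sin (b i * t) *\<^sub>R E (2 * i)))"

lemma skew_adjoint_flow:
  fixes L :: "'a::euclidean_space \<Rightarrow> 'a"
  assumes L: "skew_adjoint L"
  shows "\<exists>m a b C0 E. orthonormal_seq (2 * m) E \<and> trig_curve m C0 a b E 0 = v \<and>
    (\<forall>t. (trig_curve m C0 a b E has_vector_derivative L (trig_curve m C0 a b E t)) (at t))"
proof -
  have lin: "linear L" using L by (simp add: skew_adjoint_def)
  obtain m a b C0 E where "L C0 = 0" and ON: "orthonormal_seq (2 * m) E"
    and pairs: "\<forall>i\<in>{1..m}. rotation_pair L (b i) (E (2 * i - 1)) (E (2 * i))"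
    and v: "v = C0 + (\<Sum>i=1..m. a i *\<^sub>R E (2 * i - 1))"
    using skew_adjoint_normal_form_on[OF L subspace_UNIV] by blast
  have "(trig_curve m C0 a b E has_vector_derivative L (trig_curve m C0 a b E t)) (at t)" for t
  proof -
    have "(trig_curve m C0 a b E has_vector_derivative 0 + (\<Sum>i=1..m. a i *\<^sub>R
        L (cos (b i * t) *\<^sub>R E (2 * i - 1) + sin (b i * t) *\<^sub>R E (2 * i)))) (at t)"
      unfolding trig_curve_def[abs_def]
      using rotation_pair_circle_has_vector_derivative[OF lin] pairs
      by (intro has_vector_derivative_add has_vector_derivative_const has_vector_derivative_sum
          bounded_linear.has_vector_derivative[OF bounded_linear_scaleR_right]) auto
    then show ?thesis
      by (simp add: trig_curve_def linear_add[OF lin] linear_sum[OF lin] linear_scale[OF lin] \<open>L C0 = 0\<close>)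
  qed
  moreover have "trig_curve m C0 a b E 0 = v" by (simp add: trig_curve_def v)
  ultimately show ?thesis using ON by blast
qed

section \<open>Geodesics as flows of a Sylvester operator\<close>

definition sylvester_op :: "real^'n^'n \<Rightarrow> real^'p^'p \<Rightarrow> real^'p^'n \<Rightarrow> real^'p^'n" where
  "sylvester_op N A X = N ** X - X ** A"

lemma skew_adjoint_sylvester_op:
  fixes N :: "real^'n^'n" and A :: "real^'p^'p"
  assumes N: "transpose N = - N" and A: "transpose A = - A"
  shows "skew_adjoint (sylvester_op N A)"
  unfolding skew_adjoint_def
proof (intro conjI allI)
  show "linear (sylvester_op N A)"
    by (rule linearI) (simp_all add: sylvester_op_def matrix_algebra_simps algebra_simps)
  fix X Y :: "real^'p^'n"
  have "(N ** X) \<bullet> Y = - (X \<bullet> (N ** Y))"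
    by (simp only: inner_matrix_mult_left N matrix_mult.minus_left inner_minus_right)
  moreover have "(X ** A) \<bullet> Y = - (X \<bullet> (Y ** A))"
    by (simp only: inner_matrix_mult_right A matrix_mult.minus_right inner_minus_right)
  ultimately show "sylvester_op N A X \<bullet> Y = - (X \<bullet> sylvester_op N A Y)"
    by (simp add: sylvester_op_def inner_diff_left inner_diff_right)
qed

lemma has_vector_derivative_transpose_mult_self:
  fixes \<eta> :: "real \<Rightarrow> real^'p^'n"
  assumes "(\<eta> has_vector_derivative \<eta>') (at t)"
  shows "((\<lambda>t. transpose (\<eta> t) ** \<eta> t) has_vector_derivative
    transpose (\<eta> t) ** \<eta>' + transpose \<eta>' ** \<eta> t) (at t)"
  by (rule matrix_mult.has_vector_derivative
      [OF bounded_linear.has_vector_derivative[OF bounded_linear_transpose assms] assms])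

lemma sylvester_flow_stiefel:
  fixes \<eta> :: "real \<Rightarrow> real^'p^'n"
  assumes N: "transpose N = - N" and A: "transpose A = - A"
    and d\<eta>: "\<And>t. (\<eta> has_vector_derivative sylvester_op N A (\<eta> t)) (at t)"
    and "\<eta> 0 \<in> stiefel"
  shows "\<eta> t \<in> stiefel"
proof -
  have "transpose (\<eta> t) ** \<eta> t = mat 1"
  proof (rule skew_adjoint_flow_unique[OF skew_adjoint_sylvester_op[OF A A],
        where X = "\<lambda>t. transpose (\<eta> t) ** \<eta> t" and Y = "\<lambda>_. mat 1"])
    show "((\<lambda>t. transpose (\<eta> t) ** \<eta> t) has_vector_derivative
        sylvester_op A A (transpose (\<eta> t) ** \<eta> t)) (at t)" for t
      using has_vector_derivative_transpose_mult_self[OF d\<eta>]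
      by (simp add: sylvester_op_def matrix_algebra_simps N A algebra_simps)
    show "((\<lambda>_. mat 1) has_vector_derivative sylvester_op A A (mat 1)) (at t)" for t
      by (simp add: sylvester_op_def)
  qed (use assms(4) in \<open>simp add: stiefel_def\<close>)
  then show ?thesis by (simp add: stiefel_def)
qed

lemma sylvester_flow_symmetric:
  fixes C :: "real \<Rightarrow> real^'p^'p"
  assumes A: "transpose A = - A"
    and dC: "\<And>t. (C has_vector_derivative sylvester_op A A (C t)) (at t)"
    and "transpose (C 0) = C 0"
  shows "transpose (C t) = C t"
proof (rule skew_adjoint_flow_unique[OF skew_adjoint_sylvester_op[OF A A] _ dC,
      where X = "\<lambda>t. transpose (C t)"])
  show "((\<lambda>t. transpose (C t)) has_vector_derivative sylvester_op A A (transpose (C t))) (at t)" for t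
    using bounded_linear.has_vector_derivative[OF bounded_linear_transpose dC]
    by (simp add: sylvester_op_def matrix_algebra_simps A)
qed (fact assms(3))

lemma sylvester_flow_second_derivative:
  fixes \<eta> :: "real \<Rightarrow> real^'p^'n" and C :: "real \<Rightarrow> real^'p^'p"
  assumes N: "transpose N = - N" and A: "transpose A = - A"
    and d\<eta>: "\<And>t. (\<eta> has_vector_derivative sylvester_op N A (\<eta> t)) (at t)"
    and dC: "\<And>t. (C has_vector_derivative sylvester_op A A (C t)) (at t)"
    and init: "sylvester_op N A (sylvester_op N A (\<eta> 0)) = - (\<eta> 0 ** C 0)"
  shows "sylvester_op N A (sylvester_op N A (\<eta> t)) = - (\<eta> t ** C t)"
proof -
  let ?L = "sylvester_op N A"
  have L: "skew_adjoint ?L" by (rule skew_adjoint_sylvester_op[OF N A])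
  then have bl: "bounded_linear ?L"
    by (simp add: skew_adjoint_def linear_conv_bounded_linear)
  \<comment> \<open>\<open>L (L \<eta>) + \<eta> C\<close> solves \<open>X' = L X\<close> and vanishes at \<open>0\<close>\<close>
  have "?L (?L (\<eta> t)) + \<eta> t ** C t = 0"
  proof (rule skew_adjoint_flow_unique[OF L,
        where X = "\<lambda>t. ?L (?L (\<eta> t)) + \<eta> t ** C t" and Y = "\<lambda>_. 0"])
    show "((\<lambda>t. ?L (?L (\<eta> t)) + \<eta> t ** C t) has_vector_derivative
        ?L (?L (?L (\<eta> t)) + \<eta> t ** C t)) (at t)" for t
      using has_vector_derivative_add
        [OF bounded_linear.has_vector_derivative[OF bl bounded_linear.has_vector_derivative[OF bl d\<eta>]]
          matrix_mult.has_vector_derivative[OF d\<eta> dC]]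
      by (simp add: linear_add[OF bounded_linear.linear[OF bl]])
        (simp add: sylvester_op_def matrix_algebra_simps)
    show "((\<lambda>_. 0) has_vector_derivative ?L 0) (at t)" for t
      by (simp add: sylvester_op_def)
  qed (simp add: init)
  then show ?thesis by (simp add: eq_neg_iff_add_eq_0)
qed

text \<open>In the basis \<open>(U, Q)\<close> of the explicit formula for \<open>Exp\<^sub>U(t \<Delta>)\<close>, the left factor
  \<open>\<Delta> U\<^sup>T - U \<Delta>\<^sup>T\<close> is the block matrix \<open>[2A, -B\<^sup>T; B, 0]\<close> and the right factor is \<open>A\<close>.\<close>

definition stiefel_geodesic_op :: "real^'p^'n \<Rightarrow> real^'p^'n \<Rightarrow> real^'p^'n \<Rightarrow> real^'p^'n" where
  "stiefel_geodesic_op U \<Delta> = sylvester_op (\<Delta> ** transpose U - U ** transpose \<Delta>) (transpose U ** \<Delta>)"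

lemma stiefel_geodesic_op_generators_skew:
  assumes "\<Delta> \<in> stiefel_tangent U"
  shows "transpose (\<Delta> ** transpose U - U ** transpose \<Delta>) = - (\<Delta> ** transpose U - U ** transpose \<Delta>)"
    and "transpose (transpose U ** \<Delta>) = - (transpose U ** \<Delta>)"
  using assms by (simp_all add: stiefel_tangent_def matrix_algebra_simps)

lemma skew_adjoint_stiefel_geodesic_op:
  "\<Delta> \<in> stiefel_tangent U \<Longrightarrow> skew_adjoint (stiefel_geodesic_op U \<Delta>)"
  unfolding stiefel_geodesic_op_def
  by (intro skew_adjoint_sylvester_op stiefel_geodesic_op_generators_skew)

lemma stiefel_geodesic_op_acceleration:
  fixes U \<Delta> :: "real^'p^'n"
  assumes U: "U \<in> stiefel" and \<Delta>: "\<Delta> \<in> stiefel_tangent U"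
    and d\<eta>: "\<And>t. (\<eta> has_vector_derivative stiefel_geodesic_op U \<Delta> (\<eta> t)) (at t)"
    and \<eta>0: "\<eta> 0 = U"
  shows "\<exists>C. \<forall>t. transpose (C t) = C t \<and>
    stiefel_geodesic_op U \<Delta> (stiefel_geodesic_op U \<Delta> (\<eta> t)) = - (\<eta> t ** C t)"
proof -
  define A where "A = transpose U ** \<Delta>"
  define N where "N = \<Delta> ** transpose U - U ** transpose \<Delta>"
  note skew = stiefel_geodesic_op_generators_skew[OF \<Delta>, folded A_def N_def]
  let ?L = "stiefel_geodesic_op U \<Delta>"
  have L_def: "?L = sylvester_op N A" by (simp add: stiefel_geodesic_op_def N_def A_def)
  have UU: "transpose U ** U = mat 1" and "transpose \<Delta> ** U = - A"
    using U \<Delta> by (simp_all add: stiefel_def stiefel_tangent_def A_def matrix_algebra_simps)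
  have LU: "?L U = \<Delta>" and L\<Delta>: "?L \<Delta> = - (U ** (transpose \<Delta> ** \<Delta>))"
    using \<open>transpose \<Delta> ** U = - A\<close>
    by (simp_all add: L_def sylvester_op_def N_def A_def[symmetric] UU matrix_mult.diff_left
        matrix_mult.minus_right flip: matrix_mul_assoc)
  obtain m a b C0 E where "trig_curve m C0 a b E 0 = transpose \<Delta> ** \<Delta>"
    and "\<forall>t. (trig_curve m C0 a b E has_vector_derivative sylvester_op A A (trig_curve m C0 a b E t)) (at t)"
    using skew_adjoint_flow[OF skew_adjoint_sylvester_op[OF skew(2) skew(2)]] by blast
  then obtain C where dC: "\<And>t. (C has_vector_derivative sylvester_op A A (C t)) (at t)"
    and C0: "C 0 = transpose \<Delta> ** \<Delta>" by blast
  have "transpose (C t) = C t" for t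
    by (rule sylvester_flow_symmetric[OF skew(2) dC]) (simp add: C0 matrix_algebra_simps)
  moreover have "?L (?L (\<eta> t)) = - (\<eta> t ** C t)" for t
    using sylvester_flow_second_derivative[OF skew d\<eta>[unfolded L_def] dC] LU L\<Delta>
    by (simp add: L_def \<eta>0 C0)
  ultimately show ?thesis by blast
qed

lemma euclid_geodesic_stiefel_geodesic_flow:
  fixes U \<Delta> :: "real^'p^'n"
  assumes U: "U \<in> stiefel" and \<Delta>: "\<Delta> \<in> stiefel_tangent U"
    and d\<eta>: "\<And>t. (\<eta> has_vector_derivative stiefel_geodesic_op U \<Delta> (\<eta> t)) (at t)"
    and \<eta>0: "\<eta> 0 = U"
  shows "euclid_geodesic U \<Delta> \<eta>"
proof -
  let ?L = "stiefel_geodesic_op U \<Delta>"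
  obtain C where Csym: "\<And>t. transpose (C t) = C t" and acc: "\<And>t. ?L (?L (\<eta> t)) = - (\<eta> t ** C t)"
    using stiefel_geodesic_op_acceleration[OF assms] by blast
  have bl: "bounded_linear ?L"
    using skew_adjoint_stiefel_geodesic_op[OF \<Delta>] by (simp add: skew_adjoint_def linear_conv_bounded_linear)
  show ?thesis
    unfolding euclid_geodesic_def
  proof (intro exI conjI allI ballI)
    show "(\<eta> has_vector_derivative ?L (\<eta> t)) (at t)" for t by (rule d\<eta>)
    show "((\<lambda>t. ?L (\<eta> t)) has_vector_derivative ?L (?L (\<eta> t))) (at t)" for t
      by (rule bounded_linear.has_vector_derivative[OF bl d\<eta>])
    show "\<eta> t \<in> stiefel" for t
      using sylvester_flow_stiefel[OF stiefel_geodesic_op_generators_skew[OF \<Delta>]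
          d\<eta>[unfolded stiefel_geodesic_op_def]] U \<eta>0 by simp
    show "frob_inner (?L (?L (\<eta> t))) D = 0" if "D \<in> stiefel_tangent (\<eta> t)" for t D
    proof -
      \<comment> \<open>the acceleration \<open>-\<eta> C\<close> is normal since \<open>C\<close> is symmetric and \<open>\<eta>\<^sup>T D\<close> skew\<close>
      have "transpose (transpose (\<eta> t) ** D) = - (transpose (\<eta> t) ** D)"
        using that by (simp add: stiefel_tangent_def matrix_algebra_simps)
      then have "C t \<bullet> (transpose (\<eta> t) ** D) = 0" by (rule inner_symmetric_skew[OF Csym])
      then show ?thesis by (simp add: frob_inner_eq_inner acc inner_matrix_mult_left)
    qed
    show "?L (\<eta> 0) = \<Delta>"
      using U \<Delta> by (simp add: \<eta>0 stiefel_geodesic_op_def sylvester_op_def stiefel_def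
          stiefel_tangent_def matrix_mult.diff_left matrix_mult.minus_right flip: matrix_mul_assoc)
  qed (fact \<eta>0)
qed

lemma euclid_geodesic_rescale:
  assumes "euclid_geodesic U V \<gamma>"
  shows "euclid_geodesic U (c *\<^sub>R V) (\<lambda>s. \<gamma> (c * s))"
proof -
  obtain \<gamma>' \<gamma>'' where d1: "\<And>t. (\<gamma> has_vector_derivative \<gamma>' t) (at t)"
    and d2: "\<And>t. (\<gamma>' has_vector_derivative \<gamma>'' t) (at t)"
    and "\<And>t. \<gamma> t \<in> stiefel" and normal: "\<And>t D. D \<in> stiefel_tangent (\<gamma> t) \<Longrightarrow> frob_inner (\<gamma>'' t) D = 0"
    and "\<gamma> 0 = U" "\<gamma>' 0 = V"
    using assms unfolding euclid_geodesic_def by blast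
  have lin: "((\<lambda>s. c * s) has_vector_derivative c) (at s)" for s
    using has_vector_derivative_mult_right[OF has_vector_derivative_id, of c] by simp
  show ?thesis
    unfolding euclid_geodesic_def
  proof (intro exI conjI allI ballI)
    show "((\<lambda>s. \<gamma> (c * s)) has_vector_derivative c *\<^sub>R \<gamma>' (c * s)) (at s)" for s
      using vector_diff_chain_at[OF lin d1] by (simp add: o_def)
    show "((\<lambda>s. c *\<^sub>R \<gamma>' (c * s)) has_vector_derivative c *\<^sub>R (c *\<^sub>R \<gamma>'' (c * s))) (at s)" for s
      using vector_diff_chain_at[OF lin d2]
      by (intro bounded_linear.has_vector_derivative[OF bounded_linear_scaleR_right]) (simp add: o_def)
    show "frob_inner (c *\<^sub>R (c *\<^sub>R \<gamma>'' (c * s))) D = 0" if "D \<in> stiefel_tangent (\<gamma> (c * s))" for s D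
      using normal[OF that] by (simp add: frob_inner_eq_inner)
  qed (simp_all add: \<open>\<And>t. \<gamma> t \<in> stiefel\<close> \<open>\<gamma> 0 = U\<close> \<open>\<gamma>' 0 = V\<close>)
qed

section \<open>Uniqueness of geodesics\<close>

lemma gronwall_zero_forward:
  fixes e e' :: "real \<Rightarrow> real"
  assumes de: "\<And>s. DERIV e s :> e' s" and bound: "\<And>s. e' s \<le> B * e s"
    and nonneg: "\<And>s. e s \<ge> 0" and "e 0 = 0" and "t \<ge> 0"
  shows "e t = 0"
proof -
  define f where "f s = e s * exp (- B * s)" for s
  have "f t \<le> f 0"
  proof (rule DERIV_nonpos_imp_nonincreasing[OF \<open>t \<ge> 0\<close>])
    fix x
    have "DERIV f x :> (e' x - B * e x) * exp (- B * x)"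
      unfolding f_def by (auto intro!: derivative_eq_intros de simp: algebra_simps)
    moreover have "(e' x - B * e x) * exp (- B * x) \<le> 0"
      using bound[of x] by (intro mult_nonpos_nonneg) auto
    ultimately show "\<exists>y. DERIV f x :> y \<and> y \<le> 0" by blast
  qed
  then have "e t \<le> 0" by (simp add: f_def \<open>e 0 = 0\<close> mult_le_0_iff)
  then show ?thesis using nonneg[of t] by simp
qed

lemma gronwall_zero:
  fixes e e' :: "real \<Rightarrow> real"
  assumes de: "\<And>s. DERIV e s :> e' s" and bound: "\<And>s. \<bar>e' s\<bar> \<le> B * e s"
    and nonneg: "\<And>s. e s \<ge> 0" and e0: "e 0 = 0"
  shows "e t = 0"
proof (cases "t \<ge> 0")
  case True
  show ?thesis
    by (rule gronwall_zero_forward[OF de _ nonneg e0 True]) (use bound abs_le_D1 in blast)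
next
  case False
  have "DERIV (\<lambda>s. e (- s)) s :> e' (- s) * - 1" for s
    by (rule DERIV_chain2[OF de]) (auto intro!: derivative_eq_intros)
  moreover have "e' (- s) * - 1 \<le> B * e (- s)" for s
    using bound[of "- s"] by (simp add: abs_le_iff)
  ultimately have "e (- (- t)) = 0"
    by (rule gronwall_zero_forward[where e = "\<lambda>s. e (- s)"]) (use nonneg e0 False in auto)
  then show ?thesis by simp
qed

lemma energy_derivative_le:
  fixes a b h K :: real
  assumes "a \<ge> 0" "b \<ge> 0" "K \<ge> 0" "h \<le> K * (a + b)"
  shows "2 * a * b + 2 * b * h \<le> (1 + 3 * K) * (a\<^sup>2 + b\<^sup>2)"
proof -
  have ab: "2 * a * b \<le> a\<^sup>2 + b\<^sup>2"
    using zero_le_square[of "a - b"] by (simp add: power2_eq_square algebra_simps)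
  have "2 * b * h \<le> 2 * b * (K * (a + b))" using assms by (simp add: mult_left_mono)
  also have "\<dots> = K * (2 * a * b) + 2 * K * b\<^sup>2" by (simp add: algebra_simps power2_eq_square)
  also have "\<dots> \<le> K * (a\<^sup>2 + b\<^sup>2) + 2 * K * (a\<^sup>2 + b\<^sup>2)"
    using ab assms by (intro add_mono mult_left_mono) auto
  finally show ?thesis using ab by (simp add: algebra_simps)
qed

lemma second_order_gronwall_zero:
  fixes \<delta> \<epsilon> \<eta> :: "real \<Rightarrow> 'a::real_inner"
  assumes d\<delta>: "\<And>s. (\<delta> has_vector_derivative \<epsilon> s) (at s)"
    and d\<epsilon>: "\<And>s. (\<epsilon> has_vector_derivative \<eta> s) (at s)"
    and "K \<ge> 0" and \<eta>_le: "\<And>s. norm (\<eta> s) \<le> K * (norm (\<delta> s) + norm (\<epsilon> s))"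
    and "\<delta> 0 = 0" and "\<epsilon> 0 = 0"
  shows "\<delta> t = 0"
proof -
  define e where "e s = \<delta> s \<bullet> \<delta> s + \<epsilon> s \<bullet> \<epsilon> s" for s
  have de: "DERIV e s :> 2 * (\<delta> s \<bullet> \<epsilon> s) + 2 * (\<epsilon> s \<bullet> \<eta> s)" for s
    using has_vector_derivative_add[OF bounded_bilinear.has_vector_derivative[OF bounded_bilinear_inner d\<delta> d\<delta>]
        bounded_bilinear.has_vector_derivative[OF bounded_bilinear_inner d\<epsilon> d\<epsilon>]]
    unfolding e_def[abs_def] by (simp add: has_real_derivative_iff_has_vector_derivative inner_commute)
  have "\<bar>2 * (\<delta> s \<bullet> \<epsilon> s) + 2 * (\<epsilon> s \<bullet> \<eta> s)\<bar> \<le> (1 + 3 * K) * e s" for s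
  proof -
    have "\<bar>2 * (\<delta> s \<bullet> \<epsilon> s) + 2 * (\<epsilon> s \<bullet> \<eta> s)\<bar> \<le> 2 * norm (\<delta> s) * norm (\<epsilon> s) + 2 * norm (\<epsilon> s) * norm (\<eta> s)"
      using Cauchy_Schwarz_ineq2[of "\<delta> s" "\<epsilon> s"] Cauchy_Schwarz_ineq2[of "\<epsilon> s" "\<eta> s"] by linarith
    also have "\<dots> \<le> (1 + 3 * K) * ((norm (\<delta> s))\<^sup>2 + (norm (\<epsilon> s))\<^sup>2)"
      by (rule energy_derivative_le[OF norm_ge_zero norm_ge_zero \<open>K \<ge> 0\<close> \<eta>_le])
    finally show ?thesis by (simp add: e_def power2_norm_eq_inner)
  qed
  then have "e t = 0"
    by (rule gronwall_zero[OF de]) (simp_all add: e_def \<open>\<delta> 0 = 0\<close> \<open>\<epsilon> 0 = 0\<close>)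
  then have "\<delta> t \<bullet> \<delta> t = 0"
    using inner_ge_zero[of "\<delta> t"] inner_ge_zero[of "\<epsilon> t"] unfolding e_def by linarith
  then show ?thesis by simp
qed

lemma norm_stiefel: "(U::real^'p^'n) \<in> stiefel \<Longrightarrow> norm U = sqrt (real CARD('p))"
  by (simp add: stiefel_def norm_eq_sqrt_inner frob_inner_eq_inner[symmetric] frob_inner_def
      trace_I)

lemma stiefel_normal_vector:
  fixes Y Z :: "real^'p^'n"
  assumes Y: "Y \<in> stiefel" and normal: "\<And>D. D \<in> stiefel_tangent Y \<Longrightarrow> frob_inner Z D = 0"
  shows "Z = Y ** (transpose Y ** Z)" and "transpose (transpose Y ** Z) = transpose Y ** Z"
proof -
  have YY: "transpose Y ** Y = mat 1" and YY': "X ** transpose Y ** Y = X" for X :: "real^'p^'q"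
    using Y by (simp_all add: stiefel_def flip: matrix_mul_assoc)
  have normal': "Z \<bullet> D = 0" if "transpose Y ** D = - (transpose D ** Y)" for D
    using normal[of D] that by (simp add: stiefel_tangent_def frob_inner_eq_inner)
  \<comment> \<open>test against the tangent vectors \<open>Z - Y Y\<^sup>T Z\<close> and \<open>Y (W - W\<^sup>T)\<close> with \<open>W = Y\<^sup>T Z\<close>\<close>
  define W where "W = transpose Y ** Z"
  define D1 where "D1 = Z - Y ** W"
  have tD1: "transpose Y ** D1 = 0" by (simp add: D1_def W_def YY matrix_algebra_simps)
  then have "transpose D1 ** Y = 0" by (metis matrix_transpose_mul transpose_transpose transpose_zero)
  then have "Z \<bullet> D1 = 0" and "(Y ** W) \<bullet> D1 = 0"
    using normal'[of D1] tD1 by (simp_all add: inner_matrix_mult_left)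
  then have "D1 \<bullet> D1 = 0" by (simp add: D1_def inner_diff_left)
  then show "Z = Y ** (transpose Y ** Z)" by (simp add: D1_def W_def)
  define V where "V = W - transpose W"
  have "Z \<bullet> (Y ** V) = 0"
    by (rule normal') (simp add: V_def YY YY' matrix_algebra_simps)
  then have "W \<bullet> V = 0" by (simp add: inner_commute[of Z] inner_matrix_mult_left W_def)
  moreover have "transpose W \<bullet> V = - (W \<bullet> V)"
  proof -
    have "transpose W \<bullet> V = transpose (transpose W) \<bullet> transpose V"
      by (rule inner_transpose[symmetric])
    then show ?thesis by (simp add: V_def transpose_diff inner_diff_right)
  qed
  ultimately have "V \<bullet> V = 0" by (simp add: V_def inner_diff_left)
  then show "transpose (transpose Y ** Z) = transpose Y ** Z" by (simp add: V_def W_def)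
qed

lemma stiefel_curve_tangent:
  assumes d1: "\<And>t. ((\<gamma>::real \<Rightarrow> real^'p^'n) has_vector_derivative \<gamma>' t) (at t)"
    and st: "\<And>t. \<gamma> t \<in> stiefel"
  shows "\<gamma>' t \<in> stiefel_tangent (\<gamma> t)"
proof -
  have "((\<lambda>t. transpose (\<gamma> t) ** \<gamma> t) has_vector_derivative 0) (at t)"
    using st by (simp add: stiefel_def)
  from vector_derivative_unique_at[OF has_vector_derivative_transpose_mult_self[OF d1] this]
  show ?thesis by (simp add: stiefel_tangent_def eq_neg_iff_add_eq_0)
qed

lemma euclid_geodesic_acceleration:
  fixes \<gamma> :: "real \<Rightarrow> real^'p^'n"
  assumes d1: "\<And>t. (\<gamma> has_vector_derivative \<gamma>' t) (at t)"
    and d2: "\<And>t. (\<gamma>' has_vector_derivative \<gamma>'' t) (at t)"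
    and st: "\<And>t. \<gamma> t \<in> stiefel"
    and normal: "\<And>t D. D \<in> stiefel_tangent (\<gamma> t) \<Longrightarrow> frob_inner (\<gamma>'' t) D = 0"
  shows "\<gamma>'' t = - (\<gamma> t ** (transpose (\<gamma>' t) ** \<gamma>' t))"
proof -
  define W where "W = transpose (\<gamma> t) ** \<gamma>'' t"
  note normal_form = stiefel_normal_vector[OF st[of t] normal[where t = t], folded W_def]
  have "((\<lambda>t. transpose (\<gamma> t) ** \<gamma>' t + transpose (\<gamma>' t) ** \<gamma> t) has_vector_derivative
      (transpose (\<gamma> t) ** \<gamma>'' t + transpose (\<gamma>' t) ** \<gamma>' t) +
      (transpose (\<gamma>' t) ** \<gamma>' t + transpose (\<gamma>'' t) ** \<gamma> t)) (at t)"
    by (intro has_vector_derivative_add matrix_mult.has_vector_derivative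
        bounded_linear.has_vector_derivative[OF bounded_linear_transpose] d1 d2)
  moreover have "((\<lambda>t. transpose (\<gamma> t) ** \<gamma>' t + transpose (\<gamma>' t) ** \<gamma> t) has_vector_derivative 0) (at t)"
    using stiefel_curve_tangent[OF d1 st] by (simp add: stiefel_tangent_def)
  ultimately have "(transpose (\<gamma> t) ** \<gamma>'' t + transpose (\<gamma>' t) ** \<gamma>' t) +
      (transpose (\<gamma>' t) ** \<gamma>' t + transpose (\<gamma>'' t) ** \<gamma> t) = 0"
    by (rule vector_derivative_unique_at)
  then have "(W + transpose (\<gamma>' t) ** \<gamma>' t) + (transpose (\<gamma>' t) ** \<gamma>' t + transpose W) = 0"
    by (simp only: W_def matrix_transpose_mul transpose_transpose)
  then have "2 *\<^sub>R (W + transpose (\<gamma>' t) ** \<gamma>' t) = 0"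
    using normal_form(2) by (simp only: scaleR_2 add.commute add.left_commute add.assoc)
  then have "W = - (transpose (\<gamma>' t) ** \<gamma>' t)" by (simp add: eq_neg_iff_add_eq_0)
  with normal_form(1) show ?thesis by (simp add: matrix_mult.minus_right)
qed

lemma euclid_geodesic_speed:
  fixes \<gamma> :: "real \<Rightarrow> real^'p^'n"
  assumes d1: "\<And>t. (\<gamma> has_vector_derivative \<gamma>' t) (at t)"
    and d2: "\<And>t. (\<gamma>' has_vector_derivative \<gamma>'' t) (at t)"
    and st: "\<And>t. \<gamma> t \<in> stiefel"
    and normal: "\<And>t D. D \<in> stiefel_tangent (\<gamma> t) \<Longrightarrow> frob_inner (\<gamma>'' t) D = 0"
  shows "norm (\<gamma>' t) = norm (\<gamma>' 0)"
proof -
  have "DERIV (\<lambda>t. \<gamma>' t \<bullet> \<gamma>' t) t :> 0" for t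
    using bounded_bilinear.has_vector_derivative[OF bounded_bilinear_inner d2 d2]
      normal[OF stiefel_curve_tangent[OF d1 st]]
    by (simp add: has_real_derivative_iff_has_vector_derivative frob_inner_eq_inner inner_commute)
  then have "\<gamma>' t \<bullet> \<gamma>' t = \<gamma>' 0 \<bullet> \<gamma>' 0" by (intro DERIV_isconst_all) auto
  then show ?thesis by (simp add: norm_eq_sqrt_inner)
qed

lemma norm_geodesic_field_diff_le:
  fixes X1 X2 V1 V2 :: "real^'p^'n"
  assumes V1: "norm V1 \<le> c" and V2: "norm V2 \<le> c" and X2: "norm X2 \<le> r"
  shows "norm (X1 ** (transpose V1 ** V1) - X2 ** (transpose V2 ** V2))
    \<le> (c * c + 2 * r * c) * (norm (X1 - X2) + norm (V1 - V2))"
proof -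
  have "c \<ge> 0" "r \<ge> 0" using V1 X2 norm_ge_zero order_trans by blast+
  have "X1 ** (transpose V1 ** V1) - X2 ** (transpose V2 ** V2) =
      (X1 - X2) ** (transpose V1 ** V1) + X2 ** (transpose V1 ** (V1 - V2) + transpose (V1 - V2) ** V2)"
    by (simp add: matrix_algebra_simps)
  also have "norm \<dots> \<le> norm (X1 - X2) * (c * c) + r * (c * norm (V1 - V2) + norm (V1 - V2) * c)"
    using V1 V2 X2
    by (intro norm_triangle_le add_mono norm_matrix_mult_le_trans)
      (auto simp: norm_transpose)
  also have "\<dots> \<le> (c * c + 2 * r * c) * (norm (X1 - X2) + norm (V1 - V2))"
    using \<open>c \<ge> 0\<close> \<open>r \<ge> 0\<close> by (simp add: algebra_simps)
  finally show ?thesis .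
qed

lemma euclid_geodesic_unique:
  fixes \<gamma>1 \<gamma>2 :: "real \<Rightarrow> real^'p^'n"
  assumes "euclid_geodesic U V \<gamma>1" and "euclid_geodesic U V \<gamma>2"
  shows "\<gamma>1 = \<gamma>2"
proof
  obtain \<gamma>1' \<gamma>1'' where d1: "\<And>t. (\<gamma>1 has_vector_derivative \<gamma>1' t) (at t)"
    and dd1: "\<And>t. (\<gamma>1' has_vector_derivative \<gamma>1'' t) (at t)" and st1: "\<And>t. \<gamma>1 t \<in> stiefel"
    and n1: "\<And>t D. D \<in> stiefel_tangent (\<gamma>1 t) \<Longrightarrow> frob_inner (\<gamma>1'' t) D = 0"
    and "\<gamma>1 0 = U" "\<gamma>1' 0 = V"
    using assms(1) unfolding euclid_geodesic_def by blast
  obtain \<gamma>2' \<gamma>2'' where d2: "\<And>t. (\<gamma>2 has_vector_derivative \<gamma>2' t) (at t)"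
    and dd2: "\<And>t. (\<gamma>2' has_vector_derivative \<gamma>2'' t) (at t)" and st2: "\<And>t. \<gamma>2 t \<in> stiefel"
    and n2: "\<And>t D. D \<in> stiefel_tangent (\<gamma>2 t) \<Longrightarrow> frob_inner (\<gamma>2'' t) D = 0"
    and "\<gamma>2 0 = U" "\<gamma>2' 0 = V"
    using assms(2) unfolding euclid_geodesic_def by blast
  define K where "K = norm V * norm V + 2 * sqrt (real CARD('p)) * norm V"
  \<comment> \<open>the geodesic equation is Lipschitz on the set of bounded positions and velocities\<close>
  have bound: "norm (\<gamma>1'' s - \<gamma>2'' s) \<le> K * (norm (\<gamma>1 s - \<gamma>2 s) + norm (\<gamma>1' s - \<gamma>2' s))" for s
    using norm_geodesic_field_diff_le[of "\<gamma>1' s" "norm V" "\<gamma>2' s" "\<gamma>2 s" "sqrt (real CARD('p))" "\<gamma>1 s"]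
      euclid_geodesic_speed[OF d1 dd1 st1 n1] euclid_geodesic_speed[OF d2 dd2 st2 n2] norm_stiefel[OF st2]
      euclid_geodesic_acceleration[OF d1 dd1 st1 n1] euclid_geodesic_acceleration[OF d2 dd2 st2 n2]
    by (simp add: K_def \<open>\<gamma>1' 0 = V\<close> \<open>\<gamma>2' 0 = V\<close> norm_minus_commute)
  have "((\<lambda>s. \<gamma>1 s - \<gamma>2 s) has_vector_derivative \<gamma>1' s - \<gamma>2' s) (at s)"
    and "((\<lambda>s. \<gamma>1' s - \<gamma>2' s) has_vector_derivative \<gamma>1'' s - \<gamma>2'' s) (at s)" for s
    by (intro has_vector_derivative_diff d1 d2 dd1 dd2)+
  from second_order_gronwall_zero[OF this _ bound]
  have "\<gamma>1 t - \<gamma>2 t = 0" for t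
    by (simp add: K_def \<open>\<gamma>1 0 = U\<close> \<open>\<gamma>2 0 = U\<close> \<open>\<gamma>1' 0 = V\<close> \<open>\<gamma>2' 0 = V\<close>)
  then show "\<gamma>1 t = \<gamma>2 t" for t by simp
qed

lemma stiefel_Exp_eqI: "euclid_geodesic U V \<gamma> \<Longrightarrow> stiefel_Exp U V = \<gamma> 1"
  unfolding stiefel_Exp_def by (metis euclid_geodesic_unique the_equality)

theorem corollary3p3:
  fixes U \<Delta> :: "real^'p^'n"
  assumes "CARD('p) \<le> CARD('n)"
    and "U \<in> stiefel"
    and "\<Delta> \<in> stiefel_tangent U"
  shows "\<exists>(m::nat) (a::nat \<Rightarrow> real) (b::nat \<Rightarrow> real) (C0::real^'p^'n) (E::nat \<Rightarrow> real^'p^'n).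
           (\<forall>i\<in>{1..2*m}. \<forall>j\<in>{1..2*m}. frob_inner (E i) (E j) = (if i = j then 1 else 0)) \<and>
           (\<forall>t::real. stiefel_Exp U (t *\<^sub>R \<Delta>) =
              C0 + (\<Sum>i=1..m. a i *\<^sub>R (cos (b i * t) *\<^sub>R E (2*i - 1) + sin (b i * t) *\<^sub>R E (2*i))))"
proof -
  \<comment> \<open>\<open>p \<le> n\<close> only makes \<open>St(n,p)\<close> nonempty; the proof does not need it\<close>
  let ?L = "stiefel_geodesic_op U \<Delta>"
  obtain m a b C0 E where ON: "orthonormal_seq (2 * m) E" and "trig_curve m C0 a b E 0 = U"
    and "\<forall>t. (trig_curve m C0 a b E has_vector_derivative ?L (trig_curve m C0 a b E t)) (at t)"
    using skew_adjoint_flow[OF skew_adjoint_stiefel_geodesic_op[OF assms(3)]] by blast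
  then have geodesic: "euclid_geodesic U \<Delta> (trig_curve m C0 a b E)"
    using euclid_geodesic_stiefel_geodesic_flow[OF assms(2,3)] by blast
  have "stiefel_Exp U (t *\<^sub>R \<Delta>) = trig_curve m C0 a b E t" for t
    using stiefel_Exp_eqI[OF euclid_geodesic_rescale[OF geodesic, of t]] by simp
  then show ?thesis
    using ON by (intro exI[of _ m] exI[of _ a] exI[of _ b] exI[of _ C0] exI[of _ E])
      (simp add: orthonormal_seq_def frob_inner_eq_inner trig_curve_def)
qed

end
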